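(* Let $w\colon E\to(0,\infty)$ be a weight function on the edges of the hypercube graph satisfying $\sigma^*w=w$ for all permutations $\sigma$ of $N$. Then for every game $v$ on $N$ and every $i\in N$, $v_{i,w}(N)=\phi_i(v)$, where $v_{i,w}$ is the unique function with $v_{i,w}(\emptyset)=0$ and $\mathrm{d}v_{i,w}=P_w\mathrm{d}_iv$, and $$\phi_i(v)=\sum_{S\subset N\setminus\{i\}} \frac{|S|!\,(|N|-1-|S|)!}{|N|!}\bigl(v(S\cup\{i\})-v(S)\bigr)$$ is the Shapley value.
   Context: Let $N$ be a finite set of players. A game is a function $v\colon 2^N\to\mathbb{R}$ with $v(\emptyset)=0$. The hypercube graph $G=(V,E)$ has $V=2^N$ and oriented edges $E=\{(S,S\cup\{i\}) : i\in N,\ S\subset N\setminus\{i\}\}$. $\ell^2(V)$ is the space of real functions on $V$. Given $w\colon E\to(0,\infty)$, $\ell^2_w(E)$ is the space of real functions on $E$ with inner product $\langle f,g\rangle_w=\sum_{e\in E}w(e)f(e)g(e)$. $\mathrm{d}\colon \ell^2(V)\to\ell^2_w(E)$ is $\mathrm{d}u(S,S\cup\{i\}) = u(S\cup\{i\})-u(S)$, with range $\mathcal{R}(\mathrm{d})$. For $i\in N$, $\mathrm{d}_i\colon\ell^2(V)\to\ell^2_w(E)$ is defined by $\mathrm{d}_i u(S,S\cup\{j\}) = u(S\cup\{i\})-u(S)$ if $j=i$ and $0$ if $j\ne i$. $P_w$ is the $\langle\cdot,\cdot\rangle_w$-orthogonal projection of $\ell^2_w(E)$ onto $\mathcal{R}(\mathrm{d})$.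 For a permutation $\sigma$ of $N$, $(\sigma^*w)(S,S\cup\{i\}) = w(\sigma(S),\sigma(S)\cup\{\sigma(i)\})$. *)

theory Defs
  imports "HOL-Analysis.Analysis" "HOL-Combinatorics.Permutations"
begin

text \<open>Vertices of the hypercube: subsets of N. Oriented edges (S, S \<union> {i}).
  Functions on V are 'a set => real (only values on Pow N matter);
  functions on E are ('a set * 'a set) => real (only values on E matter).\<close>

definition hedges :: "'a set \<Rightarrow> ('a set \<times> 'a set) set" where
  "hedges N = {(S, insert i S) | S i. i \<in> N \<and> S \<subseteq> N - {i}}"

definition winner :: "'a set \<Rightarrow> ('a set \<times> 'a set \<Rightarrow> real) \<Rightarrow>
    ('a set \<times> 'a set \<Rightarrow> real) \<Rightarrow> ('a set \<times> 'a set \<Rightarrow> real) \<Rightarrow> real" where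
  "winner N w f g = (\<Sum>e\<in>hedges N. w e * f e * g e)"

definition dgrad :: "'a set \<Rightarrow> ('a set \<Rightarrow> real) \<Rightarrow> ('a set \<times> 'a set \<Rightarrow> real)" where
  "dgrad N u = (\<lambda>e. if e \<in> hedges N then u (snd e) - u (fst e) else 0)"

definition dgrad_i :: "'a set \<Rightarrow> 'a \<Rightarrow> ('a set \<Rightarrow> real) \<Rightarrow> ('a set \<times> 'a set \<Rightarrow> real)" where
  "dgrad_i N i u = (\<lambda>e. if e \<in> hedges N \<and> snd e = insert i (fst e)
                         then u (insert i (fst e)) - u (fst e) else 0)"

definition range_d :: "'a set \<Rightarrow> ('a set \<times> 'a set \<Rightarrow> real) set" where
  "range_d N = range (dgrad N)"

definition proj_w :: "'a set \<Rightarrow> ('a set \<times> 'a set \<Rightarrow> real) \<Rightarrow>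
    ('a set \<times> 'a set \<Rightarrow> real) \<Rightarrow> ('a set \<times> 'a set \<Rightarrow> real)" where
  "proj_w N w f = (THE g. g \<in> range_d N \<and>
      (\<forall>h\<in>range_d N. winner N w (\<lambda>e. f e - g e) h = 0))"

definition v_iw :: "'a set \<Rightarrow> ('a set \<times> 'a set \<Rightarrow> real) \<Rightarrow> 'a \<Rightarrow>
    ('a set \<Rightarrow> real) \<Rightarrow> ('a set \<Rightarrow> real)" where
  "v_iw N w i v = (THE u. (\<forall>S. S \<notin> Pow N \<longrightarrow> u S = 0) \<and> u {} = 0 \<and>
      dgrad N u = proj_w N w (dgrad_i N i v))"

definition shapley :: "'a set \<Rightarrow> 'a \<Rightarrow> ('a set \<Rightarrow> real) \<Rightarrow> real" where
  "shapley N i v = (\<Sum>S\<in>Pow (N - {i}).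
      fact (card S) * fact (card N - 1 - card S) / fact (card N) * (v (insert i S) - v S))"

end

theory Submission
  imports Defs
begin

(* A permutation-invariant weight depends on an edge (S, S + j) only through |S|.
   Hence, with the Shapley coefficients a_k = k! (n-1-k)! / n!, the edge function
   a_|S| / w(S, S + j) is the gradient dh of a potential h.  The identity
   k a_(k-1) = (n-k) a_k for 0 < k < n says that the flow w dh has divergence
   delta_N - delta_{}, i.e. <du, dh>_w = u(N) - u({}) for every u.  For u = v_iw this gives
   v_iw(N) = <P_w d_i v, dh>_w = <d_i v, dh>_w, and the last inner product is the Shapley sum. *)

lemma hedges_subset: "hedges N \<subseteq> Pow N \<times> Pow N"
  unfolding hedges_def by auto

lemma finite_hedges: "finite N \<Longrightarrow> finite (hedges N)"
  by (rule finite_subset[OF hedges_subset]) simp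

lemma sum_hedges_by_lower:
  assumes "finite N"
  shows "(\<Sum>e\<in>hedges N. F e) = (\<Sum>T\<in>Pow N. \<Sum>j\<in>N - T. F (T, insert j T))"
proof -
  have "hedges N = (\<lambda>(T, j). (T, insert j T)) ` (SIGMA T:Pow N. N - T)"
    unfolding hedges_def by auto
  moreover have "inj_on (\<lambda>(T, j). (T, insert j T)) (SIGMA T:Pow N. N - T)"
    by (auto simp: inj_on_def)
  ultimately show ?thesis
    using assms by (simp add: sum.reindex sum.Sigma case_prod_unfold)
qed

lemma sum_hedges_by_upper:
  assumes "finite N"
  shows "(\<Sum>e\<in>hedges N. F e) = (\<Sum>T\<in>Pow N. \<Sum>j\<in>T. F (T - {j}, T))"
proof -
  have "hedges N = (\<lambda>(T, j). (T - {j}, T)) ` (SIGMA T:Pow N. T)"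
    unfolding hedges_def by (auto simp: image_iff)
  moreover have "inj_on (\<lambda>(T, j). (T - {j}, T)) (SIGMA T:Pow N. T)"
    by (auto simp: inj_on_def)
  moreover have "\<forall>T\<in>Pow N. finite T"
    using assms by (meson PowD finite_subset)
  ultimately show ?thesis
    using assms by (simp add: sum.reindex sum.Sigma case_prod_unfold)
qed

lemma winner_diff_left: "winner N w (\<lambda>e. f e - g e) h = winner N w f h - winner N w g h"
  unfolding winner_def by (simp add: algebra_simps sum_subtractf)

lemma winner_add_right: "winner N w f (\<lambda>e. g e + h e) = winner N w f g + winner N w f h"
  unfolding winner_def by (simp add: algebra_simps sum.distrib)

lemma winner_scale_left: "winner N w (\<lambda>e. t * f e) h = t * winner N w f h"
  unfolding winner_def by (simp add: algebra_simps sum_distrib_left)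

lemma winner_sum_right:
  "winner N w f (\<lambda>e. \<Sum>S\<in>A. c S * b S e) = (\<Sum>S\<in>A. c S * winner N w f (b S))"
  unfolding winner_def
  by (simp add: sum_distrib_left sum_distrib_right algebra_simps sum.swap[of _ A])

lemma winner_self_eq_0_iff:
  assumes "finite N" and "\<forall>e\<in>hedges N. w e > 0"
  shows "winner N w r r = 0 \<longleftrightarrow> (\<forall>e\<in>hedges N. r e = 0)"
proof -
  have "\<forall>e\<in>hedges N. 0 \<le> w e * r e * r e"
    using assms(2) by (simp add: less_imp_le mult.assoc)
  then have "winner N w r r = 0 \<longleftrightarrow> (\<forall>e\<in>hedges N. w e * r e * r e = 0)"
    unfolding winner_def using finite_hedges[OF assms(1)] by (simp add: sum_nonneg_eq_0_iff)
  also have "\<dots> \<longleftrightarrow> (\<forall>e\<in>hedges N. r e = 0)"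
    using assms(2) by fastforce
  finally show ?thesis .
qed

lemma winner_eq_0_if_self_eq_0:
  assumes "finite N" and "\<forall>e\<in>hedges N. w e > 0" and "winner N w r r = 0"
  shows "winner N w f r = 0"
  using assms unfolding winner_self_eq_0_iff[OF assms(1,2)] by (simp add: winner_def)

lemma exists_orthogonal_remainder:
  assumes fin: "finite N" and pos: "\<forall>e\<in>hedges N. w e > 0" and "finite A"
  shows "\<exists>c. \<forall>T\<in>A. winner N w (\<lambda>e. f e - (\<Sum>S\<in>A. c S * b S e)) (b T) = 0"
  using \<open>finite A\<close>
proof (induction A arbitrary: f rule: finite_induct)
  case empty
  then show ?case by simp
next
  case (insert S A)
  obtain cf where cf: "\<forall>T\<in>A. winner N w (\<lambda>e. f e - (\<Sum>U\<in>A. cf U * b U e)) (b T) = 0"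
    using insert.IH by blast
  obtain cb where cb: "\<forall>T\<in>A. winner N w (\<lambda>e. b S e - (\<Sum>U\<in>A. cb U * b U e)) (b T) = 0"
    using insert.IH by blast
  define x where "x = (\<lambda>e. f e - (\<Sum>U\<in>A. cf U * b U e))"
  define r where "r = (\<lambda>e. b S e - (\<Sum>U\<in>A. cb U * b U e))"
  \<comment> \<open>Gram-Schmidt step along r. If r has norm 0, then t = 0 (division by zero), which is
    harmless because such an r is orthogonal to everything.\<close>
  define t where "t = winner N w x r / winner N w r r"
  define c where "c = (\<lambda>T. if T = S then t else cf T - t * cb T)"
  have remainder: "(\<lambda>e. f e - (\<Sum>T\<in>insert S A. c T * b T e)) = (\<lambda>e. x e - t * r e)"
  proof
    fix e
    have "(\<Sum>T\<in>insert S A. c T * b T e) = t * b S e + (\<Sum>T\<in>A. (cf T - t * cb T) * b T e)"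
      unfolding c_def using insert.hyps by (auto intro: sum.cong)
    then show "f e - (\<Sum>T\<in>insert S A. c T * b T e) = x e - t * r e"
      unfolding x_def r_def by (simp add: algebra_simps sum_subtractf sum_distrib_left)
  qed
  have orth_A: "winner N w (\<lambda>e. x e - t * r e) (b T) = 0" if "T \<in> A" for T
    using cf cb that by (simp add: winner_diff_left winner_scale_left x_def r_def)
  have orth_r: "winner N w (\<lambda>e. x e - t * r e) r = 0"
  proof (cases "winner N w r r = 0")
    case True
    then show ?thesis using winner_eq_0_if_self_eq_0[OF fin pos] by blast
  next
    case False
    then show ?thesis unfolding winner_diff_left winner_scale_left t_def by simp
  qed
  have "b S = (\<lambda>e. r e + (\<Sum>T\<in>A. cb T * b T e))"
    unfolding r_def by simp
  then have "winner N w (\<lambda>e. x e - t * r e) (b S) = 0"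
    using orth_r orth_A by (simp add: winner_add_right winner_sum_right)
  then show ?case
    using orth_A by (intro exI[of _ c]) (simp add: remainder)
qed

lemma dgrad_eq_sum_indicator:
  assumes "finite N"
  shows "dgrad N u = (\<lambda>e. \<Sum>S\<in>Pow N. u S * dgrad N (indicator {S}) e)"
proof
  fix e
  show "dgrad N u e = (\<Sum>S\<in>Pow N. u S * dgrad N (indicator {S}) e)"
  proof (cases "e \<in> hedges N")
    case True
    then have "fst e \<in> Pow N" "snd e \<in> Pow N"
      unfolding hedges_def by auto
    then have "(\<Sum>S\<in>Pow N. u S * dgrad N (indicator {S}) e)
        = (\<Sum>S\<in>Pow N. u S * indicator {S} (snd e)) - (\<Sum>S\<in>Pow N. u S * indicator {S} (fst e))"
      using True by (simp add: dgrad_def right_diff_distrib sum_subtractf)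
    also have "\<dots> = u (snd e) - u (fst e)"
      using assms \<open>fst e \<in> Pow N\<close> \<open>snd e \<in> Pow N\<close> by (simp add: indicator_def sum.delta)
    finally show ?thesis
      using True by (simp add: dgrad_def)
  qed (simp add: dgrad_def)
qed

lemma dgrad_diff: "dgrad N (\<lambda>S. u S - u' S) = (\<lambda>e. dgrad N u e - dgrad N u' e)"
  unfolding dgrad_def by auto

lemma range_d_eqI:
  assumes "p \<in> range_d N" "q \<in> range_d N" and "\<forall>e\<in>hedges N. p e = q e"
  shows "p = q"
proof
  fix e
  from assms(1,2) obtain u u' where "p = dgrad N u" "q = dgrad N u'"
    unfolding range_d_def by auto
  then show "p e = q e"
    using assms(3) by (cases "e \<in> hedges N") (simp_all add: dgrad_def)
qed

lemma ex1_orthogonal_projection: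
  assumes fin: "finite N" and pos: "\<forall>e\<in>hedges N. w e > 0"
  shows "\<exists>!p. p \<in> range_d N \<and> (\<forall>h\<in>range_d N. winner N w (\<lambda>e. f e - p e) h = 0)"
proof (rule ex_ex1I)
  obtain c where "\<forall>T\<in>Pow N. winner N w
      (\<lambda>e. f e - (\<Sum>S\<in>Pow N. c S * dgrad N (indicator {S}) e)) (dgrad N (indicator {T})) = 0"
    using exists_orthogonal_remainder[OF fin pos finite_Pow_iff[THEN iffD2, OF fin],
        of f "\<lambda>S. dgrad N (indicator {S})"] by blast
  then have c: "\<forall>T\<in>Pow N. winner N w (\<lambda>e. f e - dgrad N c e) (dgrad N (indicator {T})) = 0"
    unfolding dgrad_eq_sum_indicator[OF fin, of c] .
  have "winner N w (\<lambda>e. f e - dgrad N c e) h = 0" if "h \<in> range_d N" for h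
  proof -
    from that obtain u where h: "h = dgrad N u"
      unfolding range_d_def by auto
    show ?thesis
      unfolding h dgrad_eq_sum_indicator[OF fin, of u] winner_sum_right using c by simp
  qed
  then show "\<exists>p. p \<in> range_d N \<and> (\<forall>h\<in>range_d N. winner N w (\<lambda>e. f e - p e) h = 0)"
    unfolding range_d_def by blast
next
  fix p q
  assume p: "p \<in> range_d N \<and> (\<forall>h\<in>range_d N. winner N w (\<lambda>e. f e - p e) h = 0)"
    and q: "q \<in> range_d N \<and> (\<forall>h\<in>range_d N. winner N w (\<lambda>e. f e - q e) h = 0)"
  define h where "h = (\<lambda>e. p e - q e)"
  have "h \<in> range_d N"
    using p q unfolding range_d_def h_def by (auto simp flip: dgrad_diff)
  then have "winner N w (\<lambda>e. f e - q e) h - winner N w (\<lambda>e. f e - p e) h = 0"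
    using p q by simp
  then have "winner N w h h = 0"
    unfolding h_def winner_diff_left by simp
  then show "p = q"
    using range_d_eqI p q winner_self_eq_0_iff[OF fin pos] unfolding h_def by auto
qed

lemma proj_w:
  assumes "finite N" and "\<forall>e\<in>hedges N. w e > 0"
  shows proj_w_in_range_d: "proj_w N w f \<in> range_d N"
    and proj_w_orthogonal: "h \<in> range_d N \<Longrightarrow> winner N w (\<lambda>e. f e - proj_w N w f e) h = 0"
  using theI'[OF ex1_orthogonal_projection[OF assms]] unfolding proj_w_def by auto

lemma eq_if_dgrad_eq:
  assumes "finite N"
    and "\<forall>S. S \<notin> Pow N \<longrightarrow> u S = 0" "\<forall>S. S \<notin> Pow N \<longrightarrow> u' S = 0"
    and "u {} = u' {}" and "dgrad N u = dgrad N u'"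
  shows "u = u'"
proof
  fix S
  show "u S = u' S"
  proof (cases "S \<in> Pow N")
    case True
    then have "finite S"
      using assms(1) finite_subset by auto
    then show ?thesis
      using True
    proof (induction S rule: finite_induct)
      case empty
      then show ?case using assms(4) by simp
    next
      case (insert j T)
      then have "(T, insert j T) \<in> hedges N"
        unfolding hedges_def by auto
      then have "u (insert j T) - u T = u' (insert j T) - u' T"
        using fun_cong[OF assms(5), of "(T, insert j T)"] by (simp add: dgrad_def)
      then show ?case
        using insert by simp
    qed
  qed (use assms(2,3) in simp)
qed

lemma ex1_normalized_potential:
  assumes "finite N" and "p \<in> range_d N"
  shows "\<exists>!u. (\<forall>S. S \<notin> Pow N \<longrightarrow> u S = 0) \<and> u {} = 0 \<and> dgrad N u = p"
proof (rule ex_ex1I)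
  obtain u0 where p: "p = dgrad N u0"
    using assms(2) unfolding range_d_def by auto
  define u where "u = (\<lambda>S. if S \<in> Pow N then u0 S - u0 {} else 0)"
  have "dgrad N u = p"
    unfolding p dgrad_def u_def hedges_def by force
  then show "\<exists>u. (\<forall>S. S \<notin> Pow N \<longrightarrow> u S = 0) \<and> u {} = 0 \<and> dgrad N u = p"
    unfolding u_def by (intro exI[of _ u]) (simp add: u_def)
qed (use eq_if_dgrad_eq[OF assms(1)] in auto)

lemma v_iw:
  assumes "finite N" and "\<forall>e\<in>hedges N. w e > 0"
  shows v_iw_empty: "v_iw N w i v {} = 0"
    and dgrad_v_iw: "dgrad N (v_iw N w i v) = proj_w N w (dgrad_i N i v)"
  using theI'[OF ex1_normalized_potential[OF assms(1) proj_w_in_range_d[OF assms]]]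
  unfolding v_iw_def by auto

lemma exists_permutes_edge_to_edge:
  assumes "finite N" and "j \<in> N" "j' \<in> N"
    and "S \<subseteq> N - {j}" "S' \<subseteq> N - {j'}" and "card S = card S'"
  shows "\<exists>\<sigma>. \<sigma> permutes N \<and> \<sigma> ` S = S' \<and> \<sigma> j = j'"
proof -
  have "finite S" "finite S'"
    using assms finite_subset by blast+
  then obtain f where f: "bij_betw f S S'"
    using assms(6) by (metis finite_same_card_bij)
  define R where "R = N - insert j S"
  define R' where "R' = N - insert j' S'"
  have "j \<notin> S" "j' \<notin> S'"
    using assms(4,5) by auto
  then have "card (insert j S) = card (insert j' S')"
    using assms(6) \<open>finite S\<close> \<open>finite S'\<close> by simp
  moreover have "insert j S \<subseteq> N" "insert j' S' \<subseteq> N"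
    using assms(2-5) by auto
  ultimately have "card R = card R'"
    unfolding R_def R'_def using \<open>finite S\<close> \<open>finite S'\<close> by (simp add: card_Diff_subset)
  moreover have "finite R" "finite R'"
    unfolding R_def R'_def using assms(1) by auto
  ultimately obtain g where g: "bij_betw g R R'"
    by (metis finite_same_card_bij)
  define \<sigma> where "\<sigma> x = (if x \<in> S then f x else if x = j then j' else if x \<in> N then g x else x)" for x
  have "bij_betw \<sigma> S S'"
    using f by (rule bij_betw_cong[THEN iffD1, rotated]) (simp add: \<sigma>_def)
  moreover have "bij_betw \<sigma> {j} {j'}"
    using assms(4) by (auto simp: \<sigma>_def bij_betw_def)
  moreover have "bij_betw \<sigma> R R'"
    using g by (rule bij_betw_cong[THEN iffD1, rotated]) (auto simp: \<sigma>_def R_def)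
  ultimately have "bij_betw \<sigma> (S \<union> {j} \<union> R) (S' \<union> {j'} \<union> R')"
    using assms(4,5) by (intro bij_betw_combine) (auto simp: R'_def)
  moreover have "S \<union> {j} \<union> R = N" "S' \<union> {j'} \<union> R' = N"
    using assms by (auto simp: R_def R'_def)
  ultimately have "\<sigma> permutes N"
    using assms(4) by (intro bij_imp_permutes) (auto simp: \<sigma>_def)
  moreover have "\<sigma> ` S = S'" "\<sigma> j = j'"
    using \<open>bij_betw \<sigma> S S'\<close> assms(4) by (auto simp: bij_betw_def \<sigma>_def)
  ultimately show ?thesis by blast
qed

definition perm_invariant :: "'a set \<Rightarrow> ('a set \<times> 'a set \<Rightarrow> real) \<Rightarrow> bool" where
  "perm_invariant N w \<longleftrightarrow> (\<forall>\<sigma>. \<sigma> permutes N \<longrightarrow> (\<forall>i\<in>N. \<forall>S. S \<subseteq> N - {i} \<longrightarrow>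
      w (\<sigma> ` S, insert (\<sigma> i) (\<sigma> ` S)) = w (S, insert i S)))"

lemma perm_invariant_weight_eq:
  assumes "finite N" and "perm_invariant N w"
    and "e \<in> hedges N" "e' \<in> hedges N" and "card (fst e) = card (fst e')"
  shows "w e = w e'"
proof -
  obtain S j where e: "e = (S, insert j S)" "j \<in> N" "S \<subseteq> N - {j}"
    using assms(3) unfolding hedges_def by auto
  obtain S' j' where e': "e' = (S', insert j' S')" "j' \<in> N" "S' \<subseteq> N - {j'}"
    using assms(4) unfolding hedges_def by auto
  obtain \<sigma> where "\<sigma> permutes N" "\<sigma> ` S = S'" "\<sigma> j = j'"
    using exists_permutes_edge_to_edge[OF assms(1) e(2) e'(2) e(3) e'(3)] assms(5) e e' by auto
  then show ?thesis
    using assms(2) e e' unfolding perm_invariant_def by metis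
qed

\<comment> \<open>The weight of an arbitrary edge on level k; by perm_invariant_weight_eq the choice does not
  matter.\<close>
definition level_weight :: "'a set \<Rightarrow> ('a set \<times> 'a set \<Rightarrow> real) \<Rightarrow> nat \<Rightarrow> real" where
  "level_weight N w k = w (SOME e. e \<in> hedges N \<and> card (fst e) = k)"

lemma perm_invariant_level_weight:
  assumes "finite N" and "perm_invariant N w" and "e \<in> hedges N"
  shows "w e = level_weight N w (card (fst e))"
proof -
  have "\<exists>e'. e' \<in> hedges N \<and> card (fst e') = card (fst e)"
    using assms(3) by blast
  from someI_ex[OF this] show ?thesis
    unfolding level_weight_def using perm_invariant_weight_eq[OF assms(1,2,3)] by auto
qed

definition shapley_coeff :: "nat \<Rightarrow> nat \<Rightarrow> real" where
  "shapley_coeff n k = fact k * fact (n - 1 - k) / fact n"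

definition shapley_potential :: "'a set \<Rightarrow> ('a set \<times> 'a set \<Rightarrow> real) \<Rightarrow> 'a set \<Rightarrow> real" where
  "shapley_potential N w T = (\<Sum>k<card T. shapley_coeff (card N) k / level_weight N w k)"

lemma dgrad_shapley_potential:
  assumes "finite N" and "perm_invariant N w" and "e \<in> hedges N"
  shows "dgrad N (shapley_potential N w) e = shapley_coeff (card N) (card (fst e)) / w e"
proof -
  obtain S j where e: "e = (S, insert j S)" "j \<in> N" "S \<subseteq> N - {j}"
    using assms(3) unfolding hedges_def by auto
  then have "card (insert j S) = Suc (card S)"
    using finite_subset[OF e(3)] assms(1) by (simp add: subset_Diff_insert)
  then show ?thesis
    using assms e perm_invariant_level_weight[OF assms]
    by (simp add: dgrad_def shapley_potential_def)
qed

lemma shapley_coeff_telescope: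
  assumes "k \<le> n" "1 \<le> n"
  shows "real k * shapley_coeff n (k - 1) - real (n - k) * shapley_coeff n k
         = (if k = n then 1 else 0) - (if k = 0 then 1 else 0)"
proof -
  have fact_n: "fact n = real n * fact (n - 1)"
    using assms fact_reduce[of n] by simp
  consider "k = 0" | "k = n" | "0 < k" "k < n"
    using assms by linarith
  then show ?thesis
  proof cases
    case 3
    have "real k * fact (k - 1) = fact k"
      using 3 fact_reduce[of k, where 'a = real] by simp
    moreover have "real (n - k) * fact (n - 1 - k) = fact (n - k)"
      using 3 fact_reduce[of "n - k", where 'a = real] by (simp add: of_nat_diff)
    moreover have "n - 1 - (k - 1) = n - k"
      using 3 by simp
    ultimately show ?thesis
      using 3 unfolding shapley_coeff_def by (simp add: algebra_simps)
  qed (use assms fact_n in \<open>simp_all add: shapley_coeff_def\<close>)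
qed

lemma winner_dgrad_shapley_potential:
  assumes "finite N" and "\<forall>e\<in>hedges N. w e > 0" and "perm_invariant N w"
  shows "winner N w f (dgrad N (shapley_potential N w))
       = (\<Sum>e\<in>hedges N. shapley_coeff (card N) (card (fst e)) * f e)"
  unfolding winner_def
proof (intro sum.cong refl)
  fix e
  assume "e \<in> hedges N"
  moreover from this have "w e \<noteq> 0"
    using assms(2) by fastforce
  ultimately show "w e * f e * dgrad N (shapley_potential N w) e
      = shapley_coeff (card N) (card (fst e)) * f e"
    using dgrad_shapley_potential[OF assms(1,3)] by simp
qed

lemma sum_shapley_coeff_dgrad:
  assumes fin: "finite N" and "N \<noteq> {}"
  shows "(\<Sum>e\<in>hedges N. shapley_coeff (card N) (card (fst e)) * dgrad N u e) = u N - u {}"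
proof -
  let ?a = "shapley_coeff (card N)"
  have "(\<Sum>e\<in>hedges N. ?a (card (fst e)) * dgrad N u e)
      = (\<Sum>e\<in>hedges N. ?a (card (fst e)) * u (snd e)) - (\<Sum>e\<in>hedges N. ?a (card (fst e)) * u (fst e))"
    unfolding sum_subtractf[symmetric] by (intro sum.cong refl) (simp add: dgrad_def right_diff_distrib)
  also have "(\<Sum>e\<in>hedges N. ?a (card (fst e)) * u (snd e))
      = (\<Sum>T\<in>Pow N. real (card T) * ?a (card T - 1) * u T)"
    unfolding sum_hedges_by_upper[OF fin]
  proof (intro sum.cong refl)
    fix T
    assume "T \<in> Pow N"
    then have "finite T"
      using fin finite_subset by auto
    then show "(\<Sum>j\<in>T. ?a (card (fst (T - {j}, T))) * u (snd (T - {j}, T)))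
        = real (card T) * ?a (card T - 1) * u T"
      by simp
  qed
  also have "(\<Sum>e\<in>hedges N. ?a (card (fst e)) * u (fst e))
      = (\<Sum>T\<in>Pow N. real (card N - card T) * ?a (card T) * u T)"
    unfolding sum_hedges_by_lower[OF fin]
  proof (intro sum.cong refl)
    fix T
    assume "T \<in> Pow N"
    then have "card (N - T) = card N - card T"
      using fin by (simp add: card_Diff_subset finite_subset)
    then show "(\<Sum>j\<in>N - T. ?a (card (fst (T, insert j T))) * u (fst (T, insert j T)))
        = real (card N - card T) * ?a (card T) * u T"
      by simp
  qed
  also have "(\<Sum>T\<in>Pow N. real (card T) * ?a (card T - 1) * u T)
      - (\<Sum>T\<in>Pow N. real (card N - card T) * ?a (card T) * u T)
      = (\<Sum>T\<in>Pow N. (if T = N then u T else 0) - (if T = {} then u T else 0))"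
    unfolding sum_subtractf[symmetric]
  proof (intro sum.cong refl)
    fix T
    assume "T \<in> Pow N"
    then have "T \<subseteq> N" "finite T"
      using fin finite_subset by auto
    then have "card T \<le> card N" "card T = card N \<longleftrightarrow> T = N" "card T = 0 \<longleftrightarrow> T = {}"
      using fin card_subset_eq card_mono by auto
    moreover have "1 \<le> card N"
      using fin assms(2) by (simp add: Suc_le_eq card_gt_0_iff)
    ultimately show "real (card T) * ?a (card T - 1) * u T - real (card N - card T) * ?a (card T) * u T
        = (if T = N then u T else 0) - (if T = {} then u T else 0)"
      using shapley_coeff_telescope[of "card T" "card N"] by (simp add: left_diff_distrib[symmetric])
  qed
  also have "\<dots> = u N - u {}"
    using fin by (simp add: sum_subtractf)
  finally show ?thesis .
qed

lemma sum_shapley_coeff_dgrad_i: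
  assumes fin: "finite N" and "i \<in> N"
  shows "(\<Sum>e\<in>hedges N. shapley_coeff (card N) (card (fst e)) * dgrad_i N i v e) = shapley N i v"
proof -
  let ?F = "\<lambda>T. shapley_coeff (card N) (card T) * (v (insert i T) - v T)"
  have "(\<Sum>e\<in>hedges N. shapley_coeff (card N) (card (fst e)) * dgrad_i N i v e)
      = (\<Sum>T\<in>Pow N. \<Sum>j\<in>N - T. if j = i then ?F T else 0)"
    unfolding sum_hedges_by_lower[OF fin] dgrad_i_def
    by (intro sum.cong refl) (auto simp: hedges_def insert_ident)
  also have "\<dots> = (\<Sum>T\<in>Pow N. if i \<notin> T then ?F T else 0)"
    using fin assms(2) by (simp add: sum.delta')
  also have "\<dots> = (\<Sum>T\<in>{T\<in>Pow N. i \<notin> T}. ?F T)"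
    using fin by (intro sum.inter_filter[symmetric]) simp
  also have "{T\<in>Pow N. i \<notin> T} = Pow (N - {i})"
    by auto
  finally show ?thesis
    unfolding shapley_def shapley_coeff_def by simp
qed

theorem corollary4p2:
  fixes N :: "'a set" and w :: "'a set \<times> 'a set \<Rightarrow> real"
  assumes "finite N"
    and "\<forall>e\<in>hedges N. w e > 0"
    and "\<forall>\<sigma>. \<sigma> permutes N \<longrightarrow>
           (\<forall>i\<in>N. \<forall>S. S \<subseteq> N - {i} \<longrightarrow>
              w (\<sigma> ` S, insert (\<sigma> i) (\<sigma> ` S)) = w (S, insert i S))"
  shows "\<forall>v :: 'a set \<Rightarrow> real. v {} = 0 \<longrightarrow>
           (\<forall>i\<in>N. v_iw N w i v N = shapley N i v)"
proof (intro allI impI ballI)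
  fix v :: "'a set \<Rightarrow> real" and i
  assume "i \<in> N"
  then have "N \<noteq> {}"
    by auto
  have inv: "perm_invariant N w"
    using assms(3) unfolding perm_invariant_def .
  let ?u = "v_iw N w i v" and ?f = "dgrad_i N i v" and ?h = "dgrad N (shapley_potential N w)"
  have "winner N w (\<lambda>e. ?f e - proj_w N w ?f e) ?h = 0"
    by (rule proj_w_orthogonal[OF assms(1,2)]) (simp add: range_d_def)
  then have "winner N w (proj_w N w ?f) ?h = winner N w ?f ?h"
    unfolding winner_diff_left by simp
  then have "winner N w (dgrad N ?u) ?h = shapley N i v"
    unfolding dgrad_v_iw[OF assms(1,2)] winner_dgrad_shapley_potential[OF assms(1,2) inv]
    using sum_shapley_coeff_dgrad_i[OF assms(1) \<open>i \<in> N\<close>] by simp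
  moreover have "winner N w (dgrad N ?u) ?h = ?u N - ?u {}"
    unfolding winner_dgrad_shapley_potential[OF assms(1,2) inv]
    by (rule sum_shapley_coeff_dgrad[OF assms(1) \<open>N \<noteq> {}\<close>])
  ultimately show "?u N = shapley N i v"
    using v_iw_empty[OF assms(1,2)] by simp
qed

end
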